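(* Every $\Rsh$-closed $\Rsh$-distributive subclass of a finite multi-algebra is dissociable.
   Context: A finite non-associative algebra is a tuple $(\mathcal A,\cup,\neg,\emptyset,\mathcal B,\diamond,\overline{\cdot},e)$ where $(\mathcal A,\cup,\neg,\emptyset,\mathcal B)$ is a finite Boolean algebra (with $x\cap y=\neg(\neg x\cup\neg y)$) and for all $x,y,z$: $\overline{\overline x}=x$, $\overline{x\cup y}=\overline x\cup\overline y$, $\overline{x\diamond y}=\overline y\diamond\overline x$, $e\diamond x=x\diamond e=x$, $x\diamond(y\cup z)=(x\diamond y)\cup(x\diamond z)$, $(x\diamond y)\cap\overline z=\emptyset\iff(y\diamond z)\cap\overline x=\emptyset$. $r\subseteq r'$ means $r\cup r'=r'$. A projection operator from $\mathcal A$ to $\mathcal A'$ is a map $\Rsh$ with $\Rsh(r\cup r')=\Rsh r\cup\Rsh r'$ and $\Rsh\overline r=\overline{\Rsh r}$. A finite multi-algebra is a product $\mathcal A_1\times\cdots\times\mathcal A_m$ of finite non-associative algebras with projection operators $\Rsh_i^j:\mathcal A_i\to\mathcal A_j$ for all distinct $i,j$; $\subseteq,\diamond,\cap,\overline{\cdot}$ componentwise on relations $R=(R_1,\dots,R_m)$. $R$ is closed under projection if $R_j\subseteq\Rsh_i^jR_i$ for all distinct $i,j$; the projection closure $\Rsh R$: repeatedly replace $R_j$ by $R_j\cap\Rsh_i^jR_i$ until a fixed point. A network over $\mathcal S$ is a finite set $E$ of variables with $N^{xy}\in\mathcal S$ for all distinct $x,y$, $N^{yx}=\overline{N^{xy}}$;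 $N_i^{xy}=(N^{xy})_i$. It is trivially inconsistent if some $N_i^{xy}=\emptyset$; closed under composition if $N^{xz}\subseteq N^{xy}\diamond N^{yz}$ for all distinct $x,y,z$; closed under projection if all $N^{xy}$ are; algebraically consistent if closed under both and not trivially inconsistent. $N$ is dissociable if replacing each $N^{xy}$ by $\Rsh N^{xy}$ and then closing under composition (repeating $N^{xz}\leftarrow N^{xz}\cap(N^{xy}\diamond N^{yz})$ to a fixed point) yields a network that is algebraically consistent or trivially inconsistent; a subset is dissociable if every network over it is. A subclass is a subset closed under $\diamond$, $\cap$ and converse; slices $\mathcal S_i=\{R_i:R\in\mathcal S\}$; $\mathcal S$ is $\Rsh$-closed if $\Rsh R\in\mathcal S$ for all $R\in\mathcal S$. $\mathcal S$ is $\Rsh$-distributive if for all distinct $i,j$: for all $r,r'\in\mathcal S_i$ with $r\diamond r'\neq\emptyset$, $(\Rsh_i^jr)\diamond(\Rsh_i^jr')\subseteq\Rsh_i^j(r\diamond r')$; and for all $r,r'\in\mathcal S_i$ with $r\cap r'\neq\emptyset$, $(\Rsh_i^jr)\cap(\Rsh_i^jr')\subseteq\Rsh_i^j(r\cap r')$. *)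

theory Defs
  imports Main
begin

text \<open>A finite Boolean algebra is represented (Stone representation) as the
powerset of a finite set of atoms; union, intersection, empty set and
complement relative to the atom set are the Boolean operations.\<close>

record 'b nalg =
  atoms :: "'b set"
  comp  :: "'b set \<Rightarrow> 'b set \<Rightarrow> 'b set"
  conv  :: "'b set \<Rightarrow> 'b set"
  ident :: "'b set"

definition nalg :: "'b nalg \<Rightarrow> bool" where
  "nalg A \<longleftrightarrow>
     finite (atoms A) \<and> ident A \<subseteq> atoms A \<and>
     (\<forall>x. x \<subseteq> atoms A \<longrightarrow> conv A x \<subseteq> atoms A) \<and>
     (\<forall>x y. x \<subseteq> atoms A \<longrightarrow> y \<subseteq> atoms A \<longrightarrow> comp A x y \<subseteq> atoms A) \<and>
     (\<forall>x y z. x \<subseteq> atoms A \<longrightarrow> y \<subseteq> atoms A \<longrightarrow> z \<subseteq> atoms A \<longrightarrow>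
        conv A (conv A x) = x \<and>
        conv A (x \<union> y) = conv A x \<union> conv A y \<and>
        conv A (comp A x y) = comp A (conv A y) (conv A x) \<and>
        comp A (ident A) x = x \<and> comp A x (ident A) = x \<and>
        comp A x (y \<union> z) = comp A x y \<union> comp A x z \<and>
        ((comp A x y \<inter> conv A z = {}) \<longleftrightarrow> (comp A y z \<inter> conv A x = {})))"

text \<open>Components are indexed by 0..<dim M; prj M i j is the
projection operator from component i to component j.\<close>

record 'b malg =
  dim :: nat
  alg :: "nat \<Rightarrow> 'b nalg"
  prj :: "nat \<Rightarrow> nat \<Rightarrow> 'b set \<Rightarrow> 'b set"

definition malg :: "'b malg \<Rightarrow> bool" where
  "malg M \<longleftrightarrow>
     (\<forall>i<dim M. nalg (alg M i)) \<and>
     (\<forall>i<dim M. \<forall>j<dim M. i \<noteq> j \<longrightarrow>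
        (\<forall>r. r \<subseteq> atoms (alg M i) \<longrightarrow> prj M i j r \<subseteq> atoms (alg M j)) \<and>
        (\<forall>r r'. r \<subseteq> atoms (alg M i) \<longrightarrow> r' \<subseteq> atoms (alg M i) \<longrightarrow>
            prj M i j (r \<union> r') = prj M i j r \<union> prj M i j r') \<and>
        (\<forall>r. r \<subseteq> atoms (alg M i) \<longrightarrow>
            prj M i j (conv (alg M i) r) = conv (alg M j) (prj M i j r)))"

definition rels :: "'b malg \<Rightarrow> (nat \<Rightarrow> 'b set) set" where
  "rels M = {R. (\<forall>i<dim M. R i \<subseteq> atoms (alg M i)) \<and> (\<forall>i. dim M \<le> i \<longrightarrow> R i = {})}"

definition msub :: "'b malg \<Rightarrow> (nat \<Rightarrow> 'b set) \<Rightarrow> (nat \<Rightarrow> 'b set) \<Rightarrow> bool" where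
  "msub M R S \<longleftrightarrow> (\<forall>i<dim M. R i \<subseteq> S i)"

definition mcomp :: "'b malg \<Rightarrow> (nat \<Rightarrow> 'b set) \<Rightarrow> (nat \<Rightarrow> 'b set) \<Rightarrow> (nat \<Rightarrow> 'b set)" where
  "mcomp M R S = (\<lambda>i. if i < dim M then comp (alg M i) (R i) (S i) else {})"

definition minter :: "'b malg \<Rightarrow> (nat \<Rightarrow> 'b set) \<Rightarrow> (nat \<Rightarrow> 'b set) \<Rightarrow> (nat \<Rightarrow> 'b set)" where
  "minter M R S = (\<lambda>i. if i < dim M then R i \<inter> S i else {})"

definition mconv :: "'b malg \<Rightarrow> (nat \<Rightarrow> 'b set) \<Rightarrow> (nat \<Rightarrow> 'b set)" where
  "mconv M R = (\<lambda>i. if i < dim M then conv (alg M i) (R i) else {})"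

definition proj_closed :: "'b malg \<Rightarrow> (nat \<Rightarrow> 'b set) \<Rightarrow> bool" where
  "proj_closed M R \<longleftrightarrow>
     (\<forall>i<dim M. \<forall>j<dim M. i \<noteq> j \<longrightarrow> R j \<subseteq> prj M i j (R i))"

definition proj_step :: "'b malg \<Rightarrow> (nat \<Rightarrow> 'b set) \<Rightarrow> (nat \<Rightarrow> 'b set) \<Rightarrow> bool" where
  "proj_step M R R' \<longleftrightarrow>
     (\<exists>i<dim M. \<exists>j<dim M. i \<noteq> j \<and> R' = R(j := R j \<inter> prj M i j (R i)))"

definition proj_closure_of :: "'b malg \<Rightarrow> (nat \<Rightarrow> 'b set) \<Rightarrow> (nat \<Rightarrow> 'b set) \<Rightarrow> bool" where
  "proj_closure_of M R S \<longleftrightarrow> (proj_step M)\<^sup>*\<^sup>* R S \<and> proj_closed M S"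

definition is_subclass :: "'b malg \<Rightarrow> (nat \<Rightarrow> 'b set) set \<Rightarrow> bool" where
  "is_subclass M S \<longleftrightarrow> S \<subseteq> rels M \<and>
     (\<forall>R\<in>S. \<forall>R'\<in>S. mcomp M R R' \<in> S \<and> minter M R R' \<in> S) \<and>
     (\<forall>R\<in>S. mconv M R \<in> S)"

definition slice :: "(nat \<Rightarrow> 'b set) set \<Rightarrow> nat \<Rightarrow> 'b set set" where
  "slice S i = {R i | R. R \<in> S}"

definition proj_closed_class :: "'b malg \<Rightarrow> (nat \<Rightarrow> 'b set) set \<Rightarrow> bool" where
  "proj_closed_class M S \<longleftrightarrow> (\<forall>R\<in>S. \<forall>T. proj_closure_of M R T \<longrightarrow> T \<in> S)"

definition proj_distributive :: "'b malg \<Rightarrow> (nat \<Rightarrow> 'b set) set \<Rightarrow> bool" where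
  "proj_distributive M S \<longleftrightarrow>
     (\<forall>i<dim M. \<forall>j<dim M. i \<noteq> j \<longrightarrow>
        (\<forall>r\<in>slice S i. \<forall>r'\<in>slice S i.
           (comp (alg M i) r r' \<noteq> {} \<longrightarrow>
              comp (alg M j) (prj M i j r) (prj M i j r') \<subseteq> prj M i j (comp (alg M i) r r')) \<and>
           (r \<inter> r' \<noteq> {} \<longrightarrow>
              prj M i j r \<inter> prj M i j r' \<subseteq> prj M i j (r \<inter> r'))))"

type_synonym ('v, 'b) network = "'v \<Rightarrow> 'v \<Rightarrow> (nat \<Rightarrow> 'b set)"

definition network :: "'b malg \<Rightarrow> (nat \<Rightarrow> 'b set) set \<Rightarrow> 'v set \<Rightarrow> ('v, 'b) network \<Rightarrow> bool" where
  "network M S E N \<longleftrightarrow> finite E \<and>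
     (\<forall>x\<in>E. \<forall>y\<in>E. x \<noteq> y \<longrightarrow> N x y \<in> S \<and> N y x = mconv M (N x y))"

definition triv_inconsistent :: "'b malg \<Rightarrow> 'v set \<Rightarrow> ('v, 'b) network \<Rightarrow> bool" where
  "triv_inconsistent M E N \<longleftrightarrow>
     (\<exists>x\<in>E. \<exists>y\<in>E. x \<noteq> y \<and> (\<exists>i<dim M. N x y i = {}))"

definition comp_closed_net :: "'b malg \<Rightarrow> 'v set \<Rightarrow> ('v, 'b) network \<Rightarrow> bool" where
  "comp_closed_net M E N \<longleftrightarrow>
     (\<forall>x\<in>E. \<forall>y\<in>E. \<forall>z\<in>E. x \<noteq> y \<and> y \<noteq> z \<and> x \<noteq> z \<longrightarrow>
        msub M (N x z) (mcomp M (N x y) (N y z)))"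

definition proj_closed_net :: "'b malg \<Rightarrow> 'v set \<Rightarrow> ('v, 'b) network \<Rightarrow> bool" where
  "proj_closed_net M E N \<longleftrightarrow> (\<forall>x\<in>E. \<forall>y\<in>E. x \<noteq> y \<longrightarrow> proj_closed M (N x y))"

definition alg_consistent :: "'b malg \<Rightarrow> 'v set \<Rightarrow> ('v, 'b) network \<Rightarrow> bool" where
  "alg_consistent M E N \<longleftrightarrow>
     comp_closed_net M E N \<and> proj_closed_net M E N \<and> \<not> triv_inconsistent M E N"

text \<open>One step of the composition closure: N^{xz} := N^{xz} \<inter> (N^{xy} \<diamond> N^{yz}),
with N^{zx} updated to the converse so the result remains a network.\<close>
definition comp_step :: "'b malg \<Rightarrow> 'v set \<Rightarrow> ('v, 'b) network \<Rightarrow> ('v, 'b) network \<Rightarrow> bool" where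
  "comp_step M E N N' \<longleftrightarrow>
     (\<exists>x\<in>E. \<exists>y\<in>E. \<exists>z\<in>E. x \<noteq> y \<and> y \<noteq> z \<and> x \<noteq> z \<and>
        (let r = minter M (N x z) (mcomp M (N x y) (N y z)) in
         N' = N(x := (N x)(z := r), z := (N z)(x := mconv M r))))"

definition dissociable_net :: "'b malg \<Rightarrow> 'v set \<Rightarrow> ('v, 'b) network \<Rightarrow> bool" where
  "dissociable_net M E N \<longleftrightarrow>
     (\<forall>N1 N2.
        (\<forall>x\<in>E. \<forall>y\<in>E. x \<noteq> y \<longrightarrow> proj_closure_of M (N x y) (N1 x y)) \<and>
        (comp_step M E)\<^sup>*\<^sup>* N1 N2 \<and> comp_closed_net M E N2 \<longrightarrow>
        alg_consistent M E N2 \<or> triv_inconsistent M E N2)"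

definition dissociable :: "'b malg \<Rightarrow> (nat \<Rightarrow> 'b set) set \<Rightarrow> 'v itself \<Rightarrow> bool" where
  "dissociable M S (_ :: 'v itself) \<longleftrightarrow>
     (\<forall>(E :: 'v set) N. network M S E N \<longrightarrow> dissociable_net M E N)"

end

theory Submission
  imports Defs
begin

(* Every constraint stays in the subclass during both closures, and after the projection
   closure every constraint is closed under projection. A composition step replaces
   N^xz by N^xz meet (N^xy ; N^yz); if none of its components is empty, then for distinct
   components i, j
     R_j meet (S_j ; T_j)  <=  prj R_i meet (prj S_i ; prj T_i)  <=  prj (R_i meet (S_i ; T_i))
   by distributivity of the projection prj from i to j, so closure under projection survives.
   Hence every constraint of the final network is closed under projection or has an empty
   component: the network is algebraically consistent or trivially inconsistent. *)

lemma nalg_conv_closed: "nalg A \<Longrightarrow> x \<subseteq> atoms A \<Longrightarrow> conv A x \<subseteq> atoms A"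
  by (simp add: nalg_def)

lemma nalg_comp_closed: "nalg A \<Longrightarrow> x \<subseteq> atoms A \<Longrightarrow> y \<subseteq> atoms A \<Longrightarrow> comp A x y \<subseteq> atoms A"
  by (simp add: nalg_def)

lemma nalg_laws:
  assumes "nalg A" "x \<subseteq> atoms A" "y \<subseteq> atoms A" "z \<subseteq> atoms A"
  shows "conv A (conv A x) = x \<and>
        conv A (x \<union> y) = conv A x \<union> conv A y \<and>
        conv A (comp A x y) = comp A (conv A y) (conv A x) \<and>
        comp A (ident A) x = x \<and> comp A x (ident A) = x \<and>
        comp A x (y \<union> z) = comp A x y \<union> comp A x z \<and>
        ((comp A x y \<inter> conv A z = {}) \<longleftrightarrow> (comp A y z \<inter> conv A x = {}))"
  using assms(1)[unfolded nalg_def, THEN conjunct2, THEN conjunct2, THEN conjunct2, THEN conjunct2,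
      rule_format, OF assms(2-4)] .

lemma nalg_conv_conv: "nalg A \<Longrightarrow> x \<subseteq> atoms A \<Longrightarrow> conv A (conv A x) = x"
  using nalg_laws[of A x x x] by simp

lemma nalg_conv_union:
  "nalg A \<Longrightarrow> x \<subseteq> atoms A \<Longrightarrow> y \<subseteq> atoms A \<Longrightarrow> conv A (x \<union> y) = conv A x \<union> conv A y"
  using nalg_laws[of A x y y] by simp

lemma nalg_conv_comp:
  "nalg A \<Longrightarrow> x \<subseteq> atoms A \<Longrightarrow> y \<subseteq> atoms A \<Longrightarrow> conv A (comp A x y) = comp A (conv A y) (conv A x)"
  using nalg_laws[of A x y y] by simp

lemma nalg_comp_union:
  "nalg A \<Longrightarrow> x \<subseteq> atoms A \<Longrightarrow> y \<subseteq> atoms A \<Longrightarrow> z \<subseteq> atoms A \<Longrightarrow>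
    comp A x (y \<union> z) = comp A x y \<union> comp A x z"
  using nalg_laws[of A x y z] by simp

lemma nalg_cycle:
  "nalg A \<Longrightarrow> x \<subseteq> atoms A \<Longrightarrow> y \<subseteq> atoms A \<Longrightarrow> z \<subseteq> atoms A \<Longrightarrow>
    comp A x y \<inter> conv A z = {} \<longleftrightarrow> comp A y z \<inter> conv A x = {}"
  using nalg_laws[of A x y z] by simp

lemma nalg_conv_mono: "nalg A \<Longrightarrow> x \<subseteq> y \<Longrightarrow> y \<subseteq> atoms A \<Longrightarrow> conv A x \<subseteq> conv A y"
  using nalg_conv_union[of A x y] by (auto simp: subset_Un_eq)

lemma nalg_conv_empty: "nalg A \<Longrightarrow> conv A {} = {}"
  using nalg_conv_mono[of A "{}" "conv A {}"] nalg_conv_closed[of A "{}"] nalg_conv_conv[of A "{}"]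
  by simp

lemma nalg_comp_mono_right:
  "nalg A \<Longrightarrow> x \<subseteq> atoms A \<Longrightarrow> y \<subseteq> y' \<Longrightarrow> y' \<subseteq> atoms A \<Longrightarrow> comp A x y \<subseteq> comp A x y'"
  using nalg_comp_union[of A x y y'] by (auto simp: subset_Un_eq)

lemma nalg_comp_mono:
  assumes A: "nalg A" and "x \<subseteq> x'" "x' \<subseteq> atoms A" "y \<subseteq> y'" "y' \<subseteq> atoms A"
  shows "comp A x y \<subseteq> comp A x' y'"
proof -
  have x: "x \<subseteq> atoms A" and y: "y \<subseteq> atoms A" using assms by auto
  have "comp A x y = conv A (comp A (conv A y) (conv A x))"
    using nalg_conv_comp[OF A x y] nalg_conv_conv[OF A nalg_comp_closed[OF A x y]] by simp
  also have "\<dots> \<subseteq> conv A (comp A (conv A y) (conv A x'))"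
    using assms y by (intro nalg_conv_mono nalg_comp_mono_right nalg_comp_closed nalg_conv_closed) auto
  also have "\<dots> = comp A x' y"
    using nalg_conv_comp[OF A assms(3) y] nalg_conv_conv[OF A nalg_comp_closed[OF A assms(3) y]] by simp
  also have "\<dots> \<subseteq> comp A x' y'"
    using assms by (intro nalg_comp_mono_right)
  finally show ?thesis .
qed

(* The cycle law with z = conv A (atoms A), whose converse is all of atoms A. *)
lemma nalg_comp_empty_left:
  assumes A: "nalg A" and x: "x \<subseteq> atoms A"
  shows "comp A {} x = {}"
proof -
  let ?z = "conv A (atoms A)"
  have z: "?z \<subseteq> atoms A" using nalg_conv_closed[OF A] by simp
  have "comp A {} x \<inter> conv A ?z = {}"
    using nalg_cycle[OF A _ x z] nalg_conv_empty[OF A] by simp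
  then show ?thesis using nalg_conv_conv[OF A] nalg_comp_closed[OF A _ x, of "{}"] by auto
qed

lemma nalg_comp_empty_right:
  assumes A: "nalg A" and x: "x \<subseteq> atoms A"
  shows "comp A x {} = {}"
proof -
  let ?z = "conv A (atoms A)"
  have z: "?z \<subseteq> atoms A" using nalg_conv_closed[OF A] by simp
  have "comp A x {} \<inter> conv A ?z = {}"
    using nalg_cycle[OF A x _ z] nalg_comp_empty_left[OF A z] by simp
  then show ?thesis using nalg_conv_conv[OF A] nalg_comp_closed[OF A x, of "{}"] by auto
qed

lemma malg_nalg: "malg M \<Longrightarrow> i < dim M \<Longrightarrow> nalg (alg M i)"
  by (simp add: malg_def)

lemma malg_prj_closed:
  "malg M \<Longrightarrow> i < dim M \<Longrightarrow> j < dim M \<Longrightarrow> i \<noteq> j \<Longrightarrow> r \<subseteq> atoms (alg M i) \<Longrightarrow>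
    prj M i j r \<subseteq> atoms (alg M j)"
  by (simp add: malg_def)

lemma malg_prj_conv:
  "malg M \<Longrightarrow> i < dim M \<Longrightarrow> j < dim M \<Longrightarrow> i \<noteq> j \<Longrightarrow> r \<subseteq> atoms (alg M i) \<Longrightarrow>
    prj M i j (conv (alg M i) r) = conv (alg M j) (prj M i j r)"
  by (simp add: malg_def)

lemma rels_atoms: "R \<in> rels M \<Longrightarrow> i < dim M \<Longrightarrow> R i \<subseteq> atoms (alg M i)"
  by (simp add: rels_def)

lemma subclass_rels: "is_subclass M S \<Longrightarrow> R \<in> S \<Longrightarrow> R \<in> rels M"
  by (auto simp: is_subclass_def)

lemma subclass_mcomp: "is_subclass M S \<Longrightarrow> R \<in> S \<Longrightarrow> R' \<in> S \<Longrightarrow> mcomp M R R' \<in> S"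
  by (simp add: is_subclass_def)

lemma subclass_minter: "is_subclass M S \<Longrightarrow> R \<in> S \<Longrightarrow> R' \<in> S \<Longrightarrow> minter M R R' \<in> S"
  by (simp add: is_subclass_def)

lemma subclass_mconv: "is_subclass M S \<Longrightarrow> R \<in> S \<Longrightarrow> mconv M R \<in> S"
  by (simp add: is_subclass_def)

lemma slice_memI: "R \<in> S \<Longrightarrow> R i \<in> slice S i"
  unfolding slice_def by blast

lemma proj_closedD: "proj_closed M R \<Longrightarrow> i < dim M \<Longrightarrow> j < dim M \<Longrightarrow> i \<noteq> j \<Longrightarrow> R j \<subseteq> prj M i j (R i)"
  by (simp add: proj_closed_def)

lemma proj_distributive_comp:
  "proj_distributive M S \<Longrightarrow> i < dim M \<Longrightarrow> j < dim M \<Longrightarrow> i \<noteq> j \<Longrightarrow>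
    r \<in> slice S i \<Longrightarrow> r' \<in> slice S i \<Longrightarrow> comp (alg M i) r r' \<noteq> {} \<Longrightarrow>
    comp (alg M j) (prj M i j r) (prj M i j r') \<subseteq> prj M i j (comp (alg M i) r r')"
  unfolding proj_distributive_def by blast

lemma proj_distributive_inter:
  "proj_distributive M S \<Longrightarrow> i < dim M \<Longrightarrow> j < dim M \<Longrightarrow> i \<noteq> j \<Longrightarrow>
    r \<in> slice S i \<Longrightarrow> r' \<in> slice S i \<Longrightarrow> r \<inter> r' \<noteq> {} \<Longrightarrow>
    prj M i j r \<inter> prj M i j r' \<subseteq> prj M i j (r \<inter> r')"
  unfolding proj_distributive_def by blast

lemma proj_closed_mcomp:
  assumes M: "malg M" and SC: "is_subclass M S" and D: "proj_distributive M S"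
    and R: "R \<in> S" "proj_closed M R" and R': "R' \<in> S" "proj_closed M R'"
    and nonempty: "\<forall>i<dim M. mcomp M R R' i \<noteq> {}"
  shows "proj_closed M (mcomp M R R')"
  unfolding proj_closed_def
proof (intro allI impI)
  fix i j assume i: "i < dim M" and j: "j < dim M" and ij: "i \<noteq> j"
  have atoms: "Q i \<subseteq> atoms (alg M i)" if "Q \<in> S" for Q
    using rels_atoms[OF subclass_rels[OF SC that] i] .
  have "mcomp M R R' j = comp (alg M j) (R j) (R' j)"
    using j by (simp add: mcomp_def)
  also have "\<dots> \<subseteq> comp (alg M j) (prj M i j (R i)) (prj M i j (R' i))"
    using R R' i j ij by (intro nalg_comp_mono malg_nalg malg_prj_closed atoms proj_closedD M)
  also have "\<dots> \<subseteq> prj M i j (comp (alg M i) (R i) (R' i))"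
    using nonempty i
    by (intro proj_distributive_comp[OF D i j ij slice_memI[OF R(1)] slice_memI[OF R'(1)]])
      (simp add: mcomp_def)
  also have "\<dots> = prj M i j (mcomp M R R' i)"
    using i by (simp add: mcomp_def)
  finally show "mcomp M R R' j \<subseteq> prj M i j (mcomp M R R' i)" .
qed

lemma proj_closed_minter:
  assumes D: "proj_distributive M S"
    and R: "R \<in> S" "proj_closed M R" and R': "R' \<in> S" "proj_closed M R'"
    and nonempty: "\<forall>i<dim M. minter M R R' i \<noteq> {}"
  shows "proj_closed M (minter M R R')"
  unfolding proj_closed_def
proof (intro allI impI)
  fix i j assume i: "i < dim M" and j: "j < dim M" and ij: "i \<noteq> j"
  have "minter M R R' j \<subseteq> prj M i j (R i) \<inter> prj M i j (R' i)"
    using proj_closedD[OF R(2) i j ij] proj_closedD[OF R'(2) i j ij] j by (auto simp: minter_def)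
  also have "\<dots> \<subseteq> prj M i j (R i \<inter> R' i)"
    using nonempty i
    by (intro proj_distributive_inter[OF D i j ij slice_memI[OF R(1)] slice_memI[OF R'(1)]])
      (simp add: minter_def)
  also have "\<dots> = prj M i j (minter M R R' i)"
    using i by (simp add: minter_def)
  finally show "minter M R R' j \<subseteq> prj M i j (minter M R R' i)" .
qed

lemma proj_closed_mconv:
  assumes M: "malg M" and R: "R \<in> rels M" "proj_closed M R"
  shows "proj_closed M (mconv M R)"
  unfolding proj_closed_def
proof (intro allI impI)
  fix i j assume i: "i < dim M" and j: "j < dim M" and ij: "i \<noteq> j"
  have "conv (alg M j) (R j) \<subseteq> conv (alg M j) (prj M i j (R i))"
    using R i j ij by (intro nalg_conv_mono malg_nalg malg_prj_closed rels_atoms proj_closedD M)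
  then show "mconv M R j \<subseteq> prj M i j (mconv M R i)"
    using malg_prj_conv[OF M i j ij rels_atoms[OF R(1) i]] i j by (simp add: mconv_def)
qed

definition proj_closed_or_empty :: "'b malg \<Rightarrow> (nat \<Rightarrow> 'b set) \<Rightarrow> bool" where
  "proj_closed_or_empty M R \<longleftrightarrow> proj_closed M R \<or> (\<exists>i<dim M. R i = {})"

lemma proj_closed_or_empty_inter_comp:
  assumes M: "malg M" and SC: "is_subclass M S" and D: "proj_distributive M S"
    and in_S: "A \<in> S" "B \<in> S" "C \<in> S"
    and closed: "proj_closed_or_empty M A" "proj_closed_or_empty M B" "proj_closed_or_empty M C"
  shows "proj_closed_or_empty M (minter M A (mcomp M B C))"
proof (cases "\<exists>i<dim M. minter M A (mcomp M B C) i = {}")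
  case False
  then have nonempty: "\<forall>i<dim M. A i \<inter> comp (alg M i) (B i) (C i) \<noteq> {}"
    by (simp add: minter_def mcomp_def)
  have "B i \<noteq> {}" "C i \<noteq> {}" if i: "i < dim M" for i
    using nonempty i nalg_comp_empty_left[OF malg_nalg[OF M i]] nalg_comp_empty_right[OF malg_nalg[OF M i]]
      rels_atoms[OF subclass_rels[OF SC in_S(2)] i] rels_atoms[OF subclass_rels[OF SC in_S(3)] i]
    by auto
  moreover have "A i \<noteq> {}" if "i < dim M" for i
    using nonempty that by auto
  ultimately have "proj_closed M A" "proj_closed M B" "proj_closed M C"
    using closed unfolding proj_closed_or_empty_def by blast+
  then have "proj_closed M (mcomp M B C)"
    using nonempty by (intro proj_closed_mcomp[OF M SC D in_S(2) _ in_S(3)]) (auto simp: mcomp_def)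
  then have "proj_closed M (minter M A (mcomp M B C))"
    using False \<open>proj_closed M A\<close>
    by (intro proj_closed_minter[OF D in_S(1) _ subclass_mcomp[OF SC in_S(2,3)]]) auto
  then show ?thesis unfolding proj_closed_or_empty_def ..
qed (simp add: proj_closed_or_empty_def)

lemma proj_closed_or_empty_mconv:
  assumes M: "malg M" and R: "R \<in> rels M" "proj_closed_or_empty M R"
  shows "proj_closed_or_empty M (mconv M R)"
proof (cases "proj_closed M R")
  case True
  then show ?thesis using proj_closed_mconv[OF M R(1)] unfolding proj_closed_or_empty_def by blast
next
  case False
  then obtain i where "i < dim M" "R i = {}" using R(2) unfolding proj_closed_or_empty_def by blast
  then have "mconv M R i = {}" using nalg_conv_empty[OF malg_nalg[OF M]] by (simp add: mconv_def)
  with \<open>i < dim M\<close> show ?thesis unfolding proj_closed_or_empty_def by blast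
qed

definition constraints_proj_closed_or_empty ::
    "'b malg \<Rightarrow> (nat \<Rightarrow> 'b set) set \<Rightarrow> 'v set \<Rightarrow> ('v, 'b) network \<Rightarrow> bool" where
  "constraints_proj_closed_or_empty M S E N \<longleftrightarrow>
     (\<forall>x\<in>E. \<forall>y\<in>E. x \<noteq> y \<longrightarrow> N x y \<in> S \<and> proj_closed_or_empty M (N x y))"

lemma comp_step_preserves_proj_closed_or_empty:
  assumes M: "malg M" and SC: "is_subclass M S" and D: "proj_distributive M S"
    and step: "comp_step M E N N'" and N: "constraints_proj_closed_or_empty M S E N"
  shows "constraints_proj_closed_or_empty M S E N'"
proof -
  obtain x y z where xyz: "x \<in> E" "y \<in> E" "z \<in> E" "x \<noteq> y" "y \<noteq> z" "x \<noteq> z"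
    and N': "N' = N(x := (N x)(z := minter M (N x z) (mcomp M (N x y) (N y z))),
                   z := (N z)(x := mconv M (minter M (N x z) (mcomp M (N x y) (N y z)))))"
    using step unfolding comp_step_def Let_def by blast
  define r where "r = minter M (N x z) (mcomp M (N x y) (N y z))"
  have edges: "N a b \<in> S" "proj_closed_or_empty M (N a b)" if "a \<in> E" "b \<in> E" "a \<noteq> b" for a b
    using N that unfolding constraints_proj_closed_or_empty_def by auto
  have r: "r \<in> S" "proj_closed_or_empty M r"
    unfolding r_def using xyz
    by (simp_all add: edges subclass_minter[OF SC] subclass_mcomp[OF SC]
        proj_closed_or_empty_inter_comp[OF M SC D])
  have conv_r: "mconv M r \<in> S" "proj_closed_or_empty M (mconv M r)"
    using subclass_mconv[OF SC r(1)] proj_closed_or_empty_mconv[OF M subclass_rels[OF SC r(1)] r(2)]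
    by auto
  have N'_eq: "N' a b = (if a = x \<and> b = z then r else if a = z \<and> b = x then mconv M r else N a b)"
    for a b
    using N' xyz(6) unfolding r_def by auto
  show ?thesis
    unfolding constraints_proj_closed_or_empty_def
  proof (intro ballI impI)
    fix a b assume "a \<in> E" "b \<in> E" "a \<noteq> b"
    then show "N' a b \<in> S \<and> proj_closed_or_empty M (N' a b)"
      using r conv_r edges unfolding N'_eq by simp
  qed
qed

lemma proj_closure_proj_closed_or_empty:
  assumes "proj_closed_class M S" and "network M S E N"
    and "\<forall>x\<in>E. \<forall>y\<in>E. x \<noteq> y \<longrightarrow> proj_closure_of M (N x y) (N1 x y)"
  shows "constraints_proj_closed_or_empty M S E N1"
  unfolding constraints_proj_closed_or_empty_def
proof (intro ballI impI)
  fix x y assume "x \<in> E" "y \<in> E" "x \<noteq> y"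
  then have "N x y \<in> S" and closure: "proj_closure_of M (N x y) (N1 x y)"
    using assms(2,3) unfolding network_def by blast+
  then have "N1 x y \<in> S"
    using assms(1) unfolding proj_closed_class_def by blast
  moreover have "proj_closed M (N1 x y)"
    using closure unfolding proj_closure_of_def ..
  ultimately show "N1 x y \<in> S \<and> proj_closed_or_empty M (N1 x y)"
    unfolding proj_closed_or_empty_def by blast
qed

theorem proposition6p9:
  fixes M :: "'b malg" and S :: "(nat \<Rightarrow> 'b set) set"
  assumes "malg M"
    and "is_subclass M S"
    and "proj_closed_class M S"
    and "proj_distributive M S"
  shows "dissociable M S TYPE('v)"
  unfolding dissociable_def dissociable_net_def
proof (intro allI impI)
  fix E :: "'v set" and N N1 N2
  assume "network M S E N"
    and "(\<forall>x\<in>E. \<forall>y\<in>E. x \<noteq> y \<longrightarrow> proj_closure_of M (N x y) (N1 x y)) \<and>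
      (comp_step M E)\<^sup>*\<^sup>* N1 N2 \<and> comp_closed_net M E N2"
  then have N1: "constraints_proj_closed_or_empty M S E N1"
    and closure: "(comp_step M E)\<^sup>*\<^sup>* N1 N2" and closed: "comp_closed_net M E N2"
    using proj_closure_proj_closed_or_empty[OF assms(3)] by blast+
  from closure N1 have "constraints_proj_closed_or_empty M S E N2"
    by (induction rule: rtranclp_induct)
      (auto intro: comp_step_preserves_proj_closed_or_empty[OF assms(1,2,4)])
  then have "triv_inconsistent M E N2 \<or> proj_closed_net M E N2"
    unfolding constraints_proj_closed_or_empty_def proj_closed_or_empty_def triv_inconsistent_def
      proj_closed_net_def by blast
  then show "alg_consistent M E N2 \<or> triv_inconsistent M E N2"
    using closed unfolding alg_consistent_def by blast
qed

end
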